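(* Let $D$ be a regular $(v,k,\lambda,\mu)$-PDS in a finite group $G$ with $0<\mu<k$ and $\sqrt\Delta\in\mathbb{Z}$. Let $\mathcal{L}$ be the group of linear characters of $G$, $p$ a prime with $p\nmid\sqrt\Delta$, and $P$ a nontrivial Sylow $p$-subgroup of $\mathcal{L}$. Then for every nonprincipal $\xi'\in P$, \[\sum_{\xi\in P}\xi(D)=k+(|P|-1)\xi'(D).\] In particular all nonprincipal characters in $P$ take the same value on $D$.
   Context: A $(v,k,\lambda,\mu)$-PDS in a group $G$ of order $v$ is a $k$-subset $D$ such that every nonidentity element of $D$ is $xy^{-1}$ ($x,y\in D$) in exactly $\lambda$ ways and every nonidentity element of $G\setminus D$ in exactly $\mu$ ways; regular means $D=D^{(-1)}$ and $1\notin D$. $\Delta=(\lambda-\mu)^2+4(k-\mu)$; $\chi(D)=\sum_{d\in D}\chi(d)$. *)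

theory Defs
  imports "HOL-Algebra.Algebra" "HOL-Computational_Algebra.Primes" "HOL-Library.FuncSet" Complex_Main
begin

definition diff_count :: "('a, 'b) monoid_scheme \<Rightarrow> 'a set \<Rightarrow> 'a \<Rightarrow> nat" where
  "diff_count G D g = card {(x, y). x \<in> D \<and> y \<in> D \<and> x \<otimes>\<^bsub>G\<^esub> inv\<^bsub>G\<^esub> y = g}"

definition is_pds :: "('a, 'b) monoid_scheme \<Rightarrow> nat \<Rightarrow> nat \<Rightarrow> nat \<Rightarrow> nat \<Rightarrow> 'a set \<Rightarrow> bool" where
  "is_pds G v k lam mu D \<longleftrightarrow>
     D \<subseteq> carrier G \<and> card (carrier G) = v \<and> card D = k \<and>
     (\<forall>g \<in> D. g \<noteq> \<one>\<^bsub>G\<^esub> \<longrightarrow> diff_count G D g = lam) \<and>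
     (\<forall>g \<in> carrier G - D. g \<noteq> \<one>\<^bsub>G\<^esub> \<longrightarrow> diff_count G D g = mu)"

definition is_regular_pds :: "('a, 'b) monoid_scheme \<Rightarrow> nat \<Rightarrow> nat \<Rightarrow> nat \<Rightarrow> nat \<Rightarrow> 'a set \<Rightarrow> bool" where
  "is_regular_pds G v k lam mu D \<longleftrightarrow>
     is_pds G v k lam mu D \<and> (\<lambda>x. inv\<^bsub>G\<^esub> x) ` D = D \<and> \<one>\<^bsub>G\<^esub> \<notin> D"

definition pds_Delta :: "nat \<Rightarrow> nat \<Rightarrow> nat \<Rightarrow> int" where
  "pds_Delta k lam mu = (int lam - int mu)^2 + 4 * (int k - int mu)"

definition linear_chars :: "('a, 'b) monoid_scheme \<Rightarrow> ('a \<Rightarrow> complex) set" where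
  "linear_chars G = {\<chi> \<in> extensional (carrier G).
      (\<forall>x \<in> carrier G. \<chi> x \<noteq> 0) \<and>
      (\<forall>x \<in> carrier G. \<forall>y \<in> carrier G. \<chi> (x \<otimes>\<^bsub>G\<^esub> y) = \<chi> x * \<chi> y)}"

definition char_group :: "('a, 'b) monoid_scheme \<Rightarrow> ('a \<Rightarrow> complex) monoid" where
  "char_group G = \<lparr> carrier = linear_chars G,
     monoid.mult = (\<lambda>\<chi> \<psi>. \<lambda>x \<in> carrier G. \<chi> x * \<psi> x),
     one = (\<lambda>x \<in> carrier G. 1) \<rparr>"

definition char_sum :: "('a \<Rightarrow> complex) \<Rightarrow> 'a set \<Rightarrow> complex" where
  "char_sum \<chi> D = (\<Sum>d\<in>D. \<chi> d)"

definition is_sylow :: "('c, 'd) monoid_scheme \<Rightarrow> nat \<Rightarrow> 'c set \<Rightarrow> bool" where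
  "is_sylow H p P \<longleftrightarrow> subgroup P H \<and> card P = p ^ multiplicity p (order H)"

end

theory Submission
  imports Defs "Jordan_Normal_Form.Char_Poly" "HOL-Number_Theory.Residues"
begin

(* For a nonprincipal linear character chi, expanding chi(D) chi(D^(-1)) with the PDS
   parameters and using that chi sums to 0 over G gives chi(D)^2 = k + (lam - mu) chi(D) - mu.
   Hence chi(D) is one of the integers (lam - mu + sqrt Delta)/2, (lam - mu - sqrt Delta)/2,
   which differ by sqrt Delta.
   If chi lies in a subgroup of order p^e, its values are p^e-th roots of unity, and the
   Frobenius congruence in Z[zeta] gives chi(D)^(p^e) = sum of chi(d)^(p^e) = k modulo p.
   Both sides are rational integers, and rational algebraic integers are integers, so the
   congruence holds in Z; Fermat's little theorem turns it into chi(D) = k (mod p).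
   Two distinct values of nonprincipal characters in P would thus be congruent mod p and
   differ by sqrt Delta, contradicting that p does not divide sqrt Delta. *)

section \<open>Integer spans and algebraic integers\<close>

(* For U the group of n-th roots of unity, int_span U is the ring Z[zeta_n]. *)
inductive_set int_span :: "'a::comm_ring_1 set \<Rightarrow> 'a set" for U :: "'a set" where
  int_span_0: "0 \<in> int_span U"
| int_span_base: "u \<in> U \<Longrightarrow> u \<in> int_span U"
| int_span_add: "x \<in> int_span U \<Longrightarrow> y \<in> int_span U \<Longrightarrow> x + y \<in> int_span U"
| int_span_uminus: "x \<in> int_span U \<Longrightarrow> - x \<in> int_span U"

lemma int_span_sum: "(\<And>a. a \<in> A \<Longrightarrow> f a \<in> int_span U) \<Longrightarrow> sum f A \<in> int_span U"
  by (induction A rule: infinite_finite_induct) (auto intro: int_span_0 int_span_add)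

lemma int_span_of_int_mult:
  assumes "x \<in> int_span U"
  shows "of_int m * x \<in> int_span U"
proof -
  have nat: "of_nat n * x \<in> int_span U" for n
    by (induction n) (auto intro: int_span_0 int_span_add assms simp: distrib_right)
  show ?thesis
  proof (cases m rule: int_cases)
    case (neg n)
    then have "of_int m = - (of_nat (Suc n) :: 'a)" by simp
    then show ?thesis using nat int_span_uminus by (metis mult_minus_left)
  qed (use nat in simp)
qed

lemma int_span_eq_sum:
  assumes "finite U" "x \<in> int_span U"
  obtains a :: "'a::comm_ring_1 \<Rightarrow> int" where "x = (\<Sum>u\<in>U. of_int (a u) * u)"
proof -
  from assms(2) have "\<exists>a::'a \<Rightarrow> int. x = (\<Sum>u\<in>U. of_int (a u) * u)"
  proof induction
    case int_span_0
    show ?case by (rule exI[of _ "\<lambda>_. 0"]) simp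
  next
    case (int_span_base u)
    show ?case
      by (rule exI[of _ "\<lambda>w. if w = u then 1 else 0"])
         (simp add: if_distrib[of "\<lambda>x. of_int x * _"] sum.delta[OF assms(1)] int_span_base cong: if_cong)
  next
    case (int_span_add x y)
    then obtain a b where "x = (\<Sum>u\<in>U. of_int (a u) * u)" "y = (\<Sum>u\<in>U. of_int (b u) * u)"
      by blast
    then show ?case
      by (intro exI[of _ "\<lambda>u. a u + b u"]) (simp add: sum.distrib distrib_right)
  next
    case (int_span_uminus x)
    then obtain a where "x = (\<Sum>u\<in>U. of_int (a u) * u)" by blast
    then show ?case
      by (intro exI[of _ "\<lambda>u. - a u"]) (simp add: sum_negf)
  qed
  then show ?thesis using that by blast
qed

locale mult_submonoid =
  fixes U :: "'a::comm_ring_1 set"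
  assumes one_mem: "1 \<in> U"
    and mult_mem: "u \<in> U \<Longrightarrow> w \<in> U \<Longrightarrow> u * w \<in> U"
begin

lemma int_span_mult:
  assumes "x \<in> int_span U" "y \<in> int_span U"
  shows "x * y \<in> int_span U"
  using assms
proof (induction x rule: int_span.induct)
  case (int_span_base u)
  from int_span_base.prems show ?case
    by induction (auto simp: distrib_left intro: int_span.intros mult_mem int_span_base.hyps)
qed (auto simp: distrib_right intro: int_span.intros)

lemma int_span_of_int: "of_int m \<in> int_span U"
  using int_span_of_int_mult[OF int_span_base[OF one_mem]] by simp

lemma int_span_of_nat: "of_nat m \<in> int_span U"
  using int_span_of_int[of "int m"] by simp

lemma int_span_power: "x \<in> int_span U \<Longrightarrow> x ^ n \<in> int_span U"
  by (induction n) (simp_all add: int_span_base one_mem int_span_mult)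

lemma power_prime_add:
  assumes p: "Factorial_Ring.prime (p::nat)" and x: "x \<in> int_span U" and y: "y \<in> int_span U"
  obtains r where "r \<in> int_span U" "(x + y) ^ p = x ^ p + y ^ p + of_nat p * r"
proof -
  have p1: "p \<ge> 1" using p prime_ge_1_nat by blast
  define r where "r = (\<Sum>k\<in>{1..<p}. of_nat ((p choose k) div p) * x ^ k * y ^ (p - k))"
  have "r \<in> int_span U"
    unfolding r_def by (intro int_span_sum int_span_mult int_span_of_nat int_span_power x y)
  have "(x + y) ^ p = (\<Sum>k\<le>p. of_nat (p choose k) * x ^ k * y ^ (p - k))"
    by (rule binomial_ring)
  also have "{..p} = insert 0 (insert p {1..<p})" using p1 by auto
  also have "(\<Sum>k\<in>insert 0 (insert p {1..<p}). of_nat (p choose k) * x ^ k * y ^ (p - k)) =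
      y ^ p + x ^ p + (\<Sum>k\<in>{1..<p}. of_nat (p choose k) * x ^ k * y ^ (p - k))"
    using p1 by (subst sum.insert; simp)+
  also have "(\<Sum>k\<in>{1..<p}. of_nat (p choose k) * x ^ k * y ^ (p - k)) = of_nat p * r"
    unfolding r_def sum_distrib_left
  proof (rule sum.cong)
    fix k assume "k \<in> {1..<p}"
    then have "p dvd (p choose k)" using p by (intro dvd_choose_prime) auto
    then have "(of_nat (p choose k) :: 'a) = of_nat p * of_nat ((p choose k) div p)"
      by (metis dvd_mult_div_cancel of_nat_mult)
    then show "of_nat (p choose k) * x ^ k * y ^ (p - k) =
          of_nat p * (of_nat ((p choose k) div p) * x ^ k * y ^ (p - k))"
      by (simp add: mult.assoc)
  qed simp
  finally show ?thesis using that \<open>r \<in> int_span U\<close> by (simp add: add_ac)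
qed

lemma power_prime_sum:
  assumes p: "Factorial_Ring.prime (p::nat)" and "finite A" and "\<And>a. a \<in> A \<Longrightarrow> f a \<in> int_span U"
  obtains r where "r \<in> int_span U" "(sum f A) ^ p = (\<Sum>a\<in>A. f a ^ p) + of_nat p * r"
proof -
  from assms(2,3) have "\<exists>r\<in>int_span U. (sum f A) ^ p = (\<Sum>a\<in>A. f a ^ p) + of_nat p * r"
  proof (induction A rule: finite_induct)
    case empty
    show ?case using p by (intro bexI[of _ 0] int_span_0) (simp add: zero_power prime_gt_0_nat)
  next
    case (insert a A)
    then obtain r where r: "r \<in> int_span U" "(sum f A) ^ p = (\<Sum>a\<in>A. f a ^ p) + of_nat p * r"
      by auto
    obtain r' where r': "r' \<in> int_span U" "(f a + sum f A) ^ p = f a ^ p + (sum f A) ^ p + of_nat p * r'"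
      using power_prime_add[OF p, of "f a" "sum f A"] insert.prems by (auto intro: int_span_sum)
    show ?case
      by (rule bexI[of _ "r + r'"]) (use insert r r' in \<open>auto simp: algebra_simps intro: int_span_add\<close>)
  qed
  then show ?thesis using that by blast
qed

lemma power_prime_add_prime_mult:
  assumes p: "Factorial_Ring.prime (p::nat)" and x: "x \<in> int_span U" and r: "r \<in> int_span U"
  obtains r' where "r' \<in> int_span U" "(x + of_nat p * r) ^ p = x ^ p + of_nat p * r'"
proof -
  have pr: "of_nat p * r \<in> int_span U" by (intro int_span_mult int_span_of_nat r)
  obtain r2 where r2: "r2 \<in> int_span U" "(x + of_nat p * r) ^ p = x ^ p + (of_nat p * r) ^ p + of_nat p * r2"
    using power_prime_add[OF p x pr] by blast
  have "p = Suc (p - 1)" using p prime_gt_0_nat by simp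
  then have "(of_nat p :: 'a) ^ p = of_nat p * of_nat p ^ (p - 1)" by (metis power_Suc)
  then have "(of_nat p * r) ^ p = of_nat p * (of_nat p ^ (p - 1) * r ^ p)"
    by (simp add: power_mult_distrib)
  then have "(x + of_nat p * r) ^ p = x ^ p + of_nat p * (of_nat p ^ (p - 1) * r ^ p + r2)"
    using r2(2) by (simp add: distrib_left)
  moreover have "of_nat p ^ (p - 1) * r ^ p + r2 \<in> int_span U"
    by (intro int_span_add int_span_mult int_span_power int_span_of_nat r r2(1))
  ultimately show ?thesis using that by blast
qed

lemma power_prime_power_sum:
  assumes p: "Factorial_Ring.prime (p::nat)" and A: "finite A" and f: "\<And>a. a \<in> A \<Longrightarrow> f a \<in> int_span U"
  obtains r where "r \<in> int_span U" "(sum f A) ^ (p ^ e) = (\<Sum>a\<in>A. f a ^ (p ^ e)) + of_nat p * r"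
proof -
  have "\<exists>r\<in>int_span U. (sum f A) ^ (p ^ e) = (\<Sum>a\<in>A. f a ^ (p ^ e)) + of_nat p * r"
  proof (induction e)
    case 0
    show ?case by (intro bexI[of _ 0] int_span_0) simp
  next
    case (Suc e)
    define S where "S = (\<Sum>a\<in>A. f a ^ (p ^ e))"
    have S: "S \<in> int_span U" unfolding S_def by (intro int_span_sum int_span_power f)
    from Suc obtain r where r: "r \<in> int_span U" "(sum f A) ^ (p ^ e) = S + of_nat p * r"
      unfolding S_def by blast
    obtain r1 where r1: "r1 \<in> int_span U" "(S + of_nat p * r) ^ p = S ^ p + of_nat p * r1"
      using power_prime_add_prime_mult[OF p S r(1)] by blast
    obtain r2 where r2: "r2 \<in> int_span U" "S ^ p = (\<Sum>a\<in>A. (f a ^ (p ^ e)) ^ p) + of_nat p * r2"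
      using power_prime_sum[OF p A, of "\<lambda>a. f a ^ (p ^ e)"] f unfolding S_def
      by (metis int_span_power)
    have "(sum f A) ^ (p ^ Suc e) = ((sum f A) ^ (p ^ e)) ^ p"
      by (simp only: power_Suc2 power_mult)
    also have "\<dots> = (\<Sum>a\<in>A. (f a ^ (p ^ e)) ^ p) + of_nat p * (r2 + r1)"
      using r(2) r1(2) r2(2) by (simp add: distrib_left)
    also have "(\<Sum>a\<in>A. (f a ^ (p ^ e)) ^ p) = (\<Sum>a\<in>A. f a ^ (p ^ Suc e))"
      by (simp only: power_Suc2 power_mult)
    finally show ?case using int_span_add[OF r2(1) r1(1)] by blast
  qed
  then show ?thesis using that by blast
qed

end

lemma algebraic_int_eigenvalue_int_mat:
  fixes x :: "'a::field_char_0"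
  assumes M: "M \<in> carrier_mat n n" and x: "eigenvalue (map_mat of_int M) x"
  shows "algebraic_int x"
proof -
  have "map_mat (of_int :: int \<Rightarrow> 'a) M \<in> carrier_mat n n" using M by simp
  then have "poly (char_poly (map_mat of_int M)) x = 0"
    using eigenvalue_root_char_poly x by blast
  then have "poly (map_poly of_int (char_poly M)) x = 0"
    by (simp only: of_int_hom.char_poly_hom[OF M])
  moreover have "lead_coeff (char_poly M) = 1"
    using degree_monic_char_poly[OF M] by simp
  ultimately show ?thesis
    unfolding algebraic_int_altdef_ipoly by blast
qed

lemma algebraic_int_int_span:
  fixes U :: "'a::field_char_0 set"
  assumes U: "mult_submonoid U" "finite U" and x: "x \<in> int_span U"
  shows "algebraic_int x"
proof -
  interpret mult_submonoid U by (fact U(1))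
  obtain us where us: "set us = U" "distinct us" using finite_distinct_list[OF U(2)] by blast
  define n where "n = length us"
  have "\<exists>a::'a \<Rightarrow> int. i < n \<longrightarrow> x * us ! i = (\<Sum>u\<in>U. of_int (a u) * u)" for i
  proof (cases "i < n")
    case True
    then have "us ! i \<in> U" using us n_def by auto
    then have "x * us ! i \<in> int_span U" by (intro int_span_mult x int_span_base)
    then show ?thesis using int_span_eq_sum[OF U(2)] by metis
  qed auto
  then obtain c where c: "\<And>i. i < n \<Longrightarrow> x * us ! i = (\<Sum>u\<in>U. of_int (c i u) * u)"
    by metis
  (* The generators us form an eigenvector, with eigenvalue x, of the integer matrix M by which
     x acts on the Z-module int_span U. *)
  define M :: "int mat" where "M = mat n n (\<lambda>(i, j). c i (us ! j))"
  define v :: "'a vec" where "v = vec n (\<lambda>i. us ! i)"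
  have "map_mat of_int M *\<^sub>v v = x \<cdot>\<^sub>v v"
  proof (rule eq_vecI)
    fix i assume "i < dim_vec (x \<cdot>\<^sub>v v)"
    then have i: "i < n" by (simp add: v_def)
    have "(\<Sum>u\<in>U. of_int (c i u) * u) = (\<Sum>j<n. of_int (c i (us ! j)) * us ! j)"
      using sum.reindex_bij_betw[OF bij_betw_nth[OF us(2) refl us(1)[symmetric]],
          of "\<lambda>u. of_int (c i u) * u"] by (simp add: n_def)
    then show "(map_mat of_int M *\<^sub>v v) $ i = (x \<cdot>\<^sub>v v) $ i"
      using i c[OF i] by (simp add: M_def v_def mult_mat_vec_def scalar_prod_def atLeast0LessThan)
  qed (simp add: v_def M_def)
  moreover have "v \<noteq> 0\<^sub>v n"
  proof
    assume "v = 0\<^sub>v n"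
    obtain j where "j < n" "us ! j = 1" using one_mem us n_def by (metis in_set_conv_nth)
    then show False using \<open>v = 0\<^sub>v n\<close> by (metis index_vec index_zero_vec(1) one_neq_zero v_def)
  qed
  ultimately have "eigenvalue (map_mat of_int M) x"
    unfolding eigenvalue_def eigenvector_def by (intro exI[of _ v]) (simp add: v_def M_def)
  moreover have "M \<in> carrier_mat n n" by (simp add: M_def)
  ultimately show ?thesis using algebraic_int_eigenvalue_int_mat by blast
qed

lemma dvd_if_of_int_eq_int_span:
  fixes U :: "'a::field_char_0 set"
  assumes U: "mult_submonoid U" "finite U" and r: "r \<in> int_span U"
    and eq: "of_int a = of_int m * r"
  shows "m dvd a"
proof (cases "m = 0")
  case False
  then have "r = of_int a / of_int m" using eq by (simp add: field_simps)
  then have "r \<in> \<rat>" by simp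
  then have "r \<in> \<int>" by (rule rational_algebraic_int_is_int[OF algebraic_int_int_span[OF U r]])
  then obtain b where "r = of_int b" by (auto elim: Ints_cases)
  then have "a = m * b" using eq by (metis of_int_eq_iff of_int_mult)
  then show ?thesis by simp
qed (use eq in simp)

lemma mult_submonoid_roots_of_unity: "mult_submonoid {z::'a::comm_ring_1. z ^ n = 1}"
  by unfold_locales (simp_all add: power_mult_distrib)

lemma cong_power_prime_self:
  fixes a :: int
  assumes p: "Factorial_Ring.prime (p::nat)"
  shows "[a ^ p = a] (mod int p)"
proof (cases "int p dvd a")
  case True
  moreover have "int p dvd a ^ p" using True p by (metis dvd_power dvd_trans prime_gt_0_nat)
  ultimately show ?thesis by (simp add: cong_iff_dvd_diff)
next
  case False
  define m where "m = nat (a mod int p)"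
  have am: "[int m = a] (mod int p)"
    using p by (simp add: m_def cong_def prime_gt_0_nat)
  then have "\<not> p dvd m"
    using False by (metis cong_dvd_iff int_dvd_int_iff)
  then have "[m ^ (p - 1) = 1] (mod p)" by (rule fermat_theorem[OF p])
  then have "[m * m ^ (p - 1) = m * 1] (mod p)" by (rule cong_scalar_left)
  then have "[m ^ p = m] (mod p)"
    using p by (metis mult.right_neutral power_eq_if prime_gt_0_nat gr_implies_not0)
  then have "[int m ^ p = int m] (mod int p)" by (metis cong_int_iff of_nat_power)
  then show ?thesis using am by (metis cong_pow cong_sym cong_trans)
qed

lemma cong_power_prime_power_self:
  fixes a :: int
  assumes p: "Factorial_Ring.prime (p::nat)"
  shows "[a ^ (p ^ e) = a] (mod int p)"
proof (induction e)
  case (Suc e)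
  have "[(a ^ (p ^ e)) ^ p = a ^ (p ^ e)] (mod int p)" by (rule cong_power_prime_self[OF p])
  also have "[a ^ (p ^ e) = a] (mod int p)" by (fact Suc.IH)
  finally show ?case by (simp only: power_Suc2 power_mult)
qed simp

lemma sum_roots_of_unity_cong_card:
  fixes z :: "'i \<Rightarrow> complex"
  assumes p: "Factorial_Ring.prime p" and A: "finite A"
    and roots: "\<And>i. i \<in> A \<Longrightarrow> z i ^ (p ^ e) = 1"
    and sum_eq: "(\<Sum>i\<in>A. z i) = of_int a"
  shows "[a = int (card A)] (mod int p)"
proof -
  define U where "U = {w::complex. w ^ (p ^ e) = 1}"
  interpret mult_submonoid U
    unfolding U_def by (rule mult_submonoid_roots_of_unity)
  have "finite U"
    unfolding U_def using p by (intro finite_roots_unity) (simp add: prime_gt_0_nat Suc_leI)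
  obtain r where r: "r \<in> int_span U" "(\<Sum>i\<in>A. z i) ^ (p ^ e) = (\<Sum>i\<in>A. z i ^ (p ^ e)) + of_nat p * r"
    using power_prime_power_sum[OF p A, of z e] roots by (auto simp: U_def intro: int_span_base)
  then have "of_int (a ^ (p ^ e) - int (card A)) = of_int (int p) * r"
    using roots sum_eq by simp
  then have "[a ^ (p ^ e) = int (card A)] (mod int p)"
    unfolding cong_iff_dvd_diff
    by (rule dvd_if_of_int_eq_int_span[OF mult_submonoid_axioms \<open>finite U\<close> r(1)])
  then show ?thesis
    using cong_power_prime_power_self[OF p] by (metis cong_sym cong_trans)
qed

section \<open>Linear characters\<close>

lemma linear_char_mult:
  "\<chi> \<in> linear_chars G \<Longrightarrow> x \<in> carrier G \<Longrightarrow> y \<in> carrier G \<Longrightarrow> \<chi> (x \<otimes>\<^bsub>G\<^esub> y) = \<chi> x * \<chi> y"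
  by (simp add: linear_chars_def)

lemma linear_char_one:
  fixes G (structure)
  assumes "group G" "\<chi> \<in> linear_chars G"
  shows "\<chi> \<one>\<^bsub>G\<^esub> = 1"
proof -
  interpret group G by fact
  have "\<chi> \<one> * \<chi> \<one> = \<chi> \<one> * 1" using linear_char_mult[OF assms(2), of \<one> \<one>] by simp
  moreover have "\<chi> \<one> \<noteq> 0" using assms(2) by (simp add: linear_chars_def)
  ultimately show ?thesis by (metis mult_left_cancel)
qed

lemma carrier_char_group [simp]: "carrier (char_group G) = linear_chars G"
  by (simp add: char_group_def)

lemma one_char_group: "\<one>\<^bsub>char_group G\<^esub> = (\<lambda>x\<in>carrier G. 1)"
  by (simp add: char_group_def)

lemma char_group_nat_pow:
  assumes "\<chi> \<in> linear_chars G" "x \<in> carrier G"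
  shows "(\<chi> [^]\<^bsub>char_group G\<^esub> (n::nat)) x = \<chi> x ^ n"
  by (induction n) (use assms in \<open>auto simp: char_group_def\<close>)

lemma group_char_group:
  assumes "group G"
  shows "group (char_group G)"
proof -
  interpret group G by fact
  show ?thesis
  proof (rule groupI)
    fix \<chi> assume "\<chi> \<in> carrier (char_group G)"
    then have \<chi>: "\<chi> \<in> linear_chars G" by simp
    show "\<one>\<^bsub>char_group G\<^esub> \<otimes>\<^bsub>char_group G\<^esub> \<chi> = \<chi>"
      using \<chi> by (auto simp: char_group_def linear_chars_def extensional_def)
    have "(\<lambda>x\<in>carrier G. inverse (\<chi> x)) \<in> linear_chars G"
      using \<chi> by (auto simp: linear_chars_def)
    moreover have "(\<lambda>x\<in>carrier G. inverse (\<chi> x)) \<otimes>\<^bsub>char_group G\<^esub> \<chi> = \<one>\<^bsub>char_group G\<^esub>"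
      using \<chi> by (auto simp: char_group_def linear_chars_def)
    ultimately show "\<exists>\<psi>\<in>carrier (char_group G). \<psi> \<otimes>\<^bsub>char_group G\<^esub> \<chi> = \<one>\<^bsub>char_group G\<^esub>"
      by auto
  qed (auto simp: char_group_def linear_chars_def mult.assoc)
qed

lemma sum_nonprincipal_linear_char:
  fixes G (structure)
  assumes "group G" "finite (carrier G)"
    and \<chi>: "\<chi> \<in> linear_chars G" "\<chi> \<noteq> \<one>\<^bsub>char_group G\<^esub>"
  shows "(\<Sum>x\<in>carrier G. \<chi> x) = 0"
proof -
  interpret group G by fact
  obtain h where h: "h \<in> carrier G" "\<chi> h \<noteq> 1"
  proof (rule ccontr)
    assume "\<not> thesis"
    with that have "\<chi> = (\<lambda>x\<in>carrier G. 1)"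
      using \<chi>(1) by (auto simp: linear_chars_def extensional_def fun_eq_iff)
    then show False using \<chi>(2) by (simp add: one_char_group)
  qed
  have "(\<Sum>x\<in>carrier G. \<chi> x) = (\<Sum>x\<in>carrier G. \<chi> (h \<otimes> x))"
    by (rule sum.reindex_bij_betw[symmetric]) (simp add: bij_betw_def inj_on_cmult surj_const_mult h(1))
  also have "\<dots> = \<chi> h * (\<Sum>x\<in>carrier G. \<chi> x)"
    by (simp add: sum_distrib_left linear_char_mult[OF \<chi>(1) h(1)])
  finally show ?thesis using h(2) by (metis mult_cancel_right2)
qed

section \<open>Character values of regular partial difference sets\<close>

lemma diff_count_one:
  fixes G (structure)
  assumes "group G" "D \<subseteq> carrier G"
  shows "diff_count G D \<one> = card D"
proof -
  interpret group G by fact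
  have "{(x, y). x \<in> D \<and> y \<in> D \<and> x \<otimes> inv y = \<one>} = (\<lambda>x. (x, x)) ` D"
    using assms(2) by (auto dest: inv_equality simp: subset_iff)
  then show ?thesis
    unfolding diff_count_def by (simp add: card_image inj_on_def)
qed

lemma char_sum_mult_sum_inv:
  fixes G (structure)
  assumes "group G" "finite (carrier G)" and D: "D \<subseteq> carrier G" and \<chi>: "\<chi> \<in> linear_chars G"
  shows "char_sum \<chi> D * (\<Sum>y\<in>D. \<chi> (inv y)) = (\<Sum>g\<in>carrier G. of_nat (diff_count G D g) * \<chi> g)"
proof -
  interpret group G by fact
  have "finite D" using D assms(2) finite_subset by blast
  let ?q = "\<lambda>(x, y). x \<otimes> inv y"
  have "char_sum \<chi> D * (\<Sum>y\<in>D. \<chi> (inv y)) = (\<Sum>xy\<in>D \<times> D. \<chi> (?q xy))"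
    unfolding char_sum_def sum_product sum.cartesian_product
    by (intro sum.cong refl) (auto simp: linear_char_mult[OF \<chi>] subsetD[OF D])
  also have "\<dots> = (\<Sum>g\<in>carrier G. \<Sum>xy\<in>{xy \<in> D \<times> D. ?q xy = g}. \<chi> (?q xy))"
    by (rule sum.group[symmetric]) (use \<open>finite D\<close> assms(2) D in auto)
  also have "\<dots> = (\<Sum>g\<in>carrier G. of_nat (diff_count G D g) * \<chi> g)"
  proof (rule sum.cong[OF refl])
    fix g
    have "(\<Sum>xy\<in>{xy \<in> D \<times> D. ?q xy = g}. \<chi> (?q xy)) = (\<Sum>xy\<in>{xy \<in> D \<times> D. ?q xy = g}. \<chi> g)"
      by (rule sum.cong) auto
    moreover have "{xy \<in> D \<times> D. ?q xy = g} = {(x, y). x \<in> D \<and> y \<in> D \<and> x \<otimes> inv y = g}" by auto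
    ultimately show "(\<Sum>xy\<in>{xy \<in> D \<times> D. ?q xy = g}. \<chi> (?q xy)) = of_nat (diff_count G D g) * \<chi> g"
      unfolding diff_count_def by simp
  qed
  finally show ?thesis .
qed

lemma regular_pds_char_sum_square:
  fixes G (structure)
  assumes G: "group G" "finite (carrier G)" and pds: "is_regular_pds G v k lam mu D"
    and \<chi>: "\<chi> \<in> linear_chars G" "\<chi> \<noteq> \<one>\<^bsub>char_group G\<^esub>"
  shows "(char_sum \<chi> D)\<^sup>2 = of_nat k + (of_nat lam - of_nat mu) * char_sum \<chi> D - of_nat mu"
proof -
  interpret group G by (fact G(1))
  have D: "D \<subseteq> carrier G" and k: "card D = k"
    and lam: "\<And>g. g \<in> D \<Longrightarrow> diff_count G D g = lam"
    and mu: "\<And>g. g \<in> carrier G - D \<Longrightarrow> g \<noteq> \<one> \<Longrightarrow> diff_count G D g = mu"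
    and inv_D: "(\<lambda>x. inv x) ` D = D" and one_D: "\<one> \<notin> D"
    using pds unfolding is_regular_pds_def is_pds_def by auto
  have "inj_on (\<lambda>x. inv x) D" using D by (intro inj_onI) (metis inv_inv subsetD)
  then have "(\<Sum>y\<in>D. \<chi> (inv y)) = char_sum \<chi> D"
    unfolding char_sum_def by (metis (no_types) inv_D sum.reindex_cong)
  then have "(char_sum \<chi> D)\<^sup>2 = (\<Sum>g\<in>carrier G. of_nat (diff_count G D g) * \<chi> g)"
    using char_sum_mult_sum_inv[OF G D \<chi>(1)] by (simp add: power2_eq_square)
  also have "\<dots> = (\<Sum>g\<in>carrier G. of_nat mu * \<chi> g
      + (if g = \<one> then (of_nat k - of_nat mu) * \<chi> g else 0)
      + (if g \<in> D then (of_nat lam - of_nat mu) * \<chi> g else 0))"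
  proof (rule sum.cong[OF refl])
    fix g assume "g \<in> carrier G"
    then show "of_nat (diff_count G D g) * \<chi> g = of_nat mu * \<chi> g
      + (if g = \<one> then (of_nat k - of_nat mu) * \<chi> g else 0)
      + (if g \<in> D then (of_nat lam - of_nat mu) * \<chi> g else 0)"
      using diff_count_one[OF G(1) D] k lam mu one_D by (auto simp: algebra_simps)
  qed
  also have "\<dots> = of_nat mu * (\<Sum>g\<in>carrier G. \<chi> g) + (of_nat k - of_nat mu) * \<chi> \<one>
      + (of_nat lam - of_nat mu) * char_sum \<chi> D"
    using G(2) D by (simp add: sum.distrib sum_distrib_left sum.inter_restrict[symmetric]
        char_sum_def Int_absorb1)
  finally show ?thesis
    using sum_nonprincipal_linear_char[OF G \<chi>] linear_char_one[OF G(1) \<chi>(1)] by simp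
qed

lemma subgroup_nat_pow_card_eq_one:
  assumes "group H" "subgroup P H" "x \<in> P"
  shows "x [^]\<^bsub>H\<^esub> card P = \<one>\<^bsub>H\<^esub>"
proof -
  interpret group H by fact
  interpret P: group "H\<lparr>carrier := P\<rparr>" by (rule subgroup.subgroup_is_group[OF assms(2) is_group])
  have "x [^]\<^bsub>H\<lparr>carrier := P\<rparr>\<^esub> Coset.order (H\<lparr>carrier := P\<rparr>) = \<one>\<^bsub>H\<lparr>carrier := P\<rparr>\<^esub>"
    using P.pow_order_eq_1 assms(3) by simp
  then show ?thesis using nat_pow_consistent[of x "card P" P] by (simp add: Coset.order_def)
qed

lemma regular_pds_char_sum_eq_of_int:
  fixes G (structure)
  assumes G: "group G" "finite (carrier G)" and pds: "is_regular_pds G v k lam mu D"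
    and s: "s\<^sup>2 = pds_Delta k lam mu"
    and \<chi>: "\<chi> \<in> linear_chars G" "\<chi> \<noteq> \<one>\<^bsub>char_group G\<^esub>"
  obtains c :: int where "char_sum \<chi> D = of_int c"
    and "2 * c = int lam - int mu + s \<or> 2 * c = int lam - int mu - s"
proof -
  define b where "b = int lam - int mu"
  have s_sq: "s\<^sup>2 = b\<^sup>2 + 4 * (int k - int mu)" using s by (simp add: pds_Delta_def b_def)
  have c_sq: "(char_sum \<chi> D)\<^sup>2 = of_nat k + of_int b * char_sum \<chi> D - of_nat mu"
    using regular_pds_char_sum_square[OF G pds \<chi>] by (simp add: b_def)
  have "(of_int s :: complex)\<^sup>2 = (of_int b)\<^sup>2 + 4 * (of_nat k - of_nat mu)"
    using arg_cong[OF s_sq, of "of_int :: int \<Rightarrow> complex"] by simp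
  also have "\<dots> = 4 * (char_sum \<chi> D)\<^sup>2 - 4 * of_int b * char_sum \<chi> D + (of_int b)\<^sup>2"
    by (simp add: c_sq algebra_simps)
  also have "\<dots> = (2 * char_sum \<chi> D - of_int b)\<^sup>2"
    by (simp add: power2_eq_square algebra_simps)
  finally have "(2 * char_sum \<chi> D - of_int b)\<^sup>2 = (of_int s)\<^sup>2" ..
  then have two_cases: "2 * char_sum \<chi> D = of_int (b + s) \<or> 2 * char_sum \<chi> D = of_int (b - s)"
    by (auto simp: power2_eq_iff algebra_simps)
  have "even s \<longleftrightarrow> even b" using arg_cong[OF s_sq, of even] by simp
  then have "even (b + s)" "even (b - s)" by auto
  from two_cases show ?thesis
  proof
    assume "2 * char_sum \<chi> D = of_int (b + s)"
    moreover obtain c where c: "b + s = 2 * c" using \<open>even (b + s)\<close> by (rule evenE)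
    ultimately have "char_sum \<chi> D = of_int c" by simp
    with c show ?thesis using that by (simp add: b_def)
  next
    assume "2 * char_sum \<chi> D = of_int (b - s)"
    moreover obtain c where c: "b - s = 2 * c" using \<open>even (b - s)\<close> by (rule evenE)
    ultimately have "char_sum \<chi> D = of_int c" by simp
    with c show ?thesis using that by (simp add: b_def)
  qed
qed

lemma sum_point_plus_const:
  fixes f :: "'a \<Rightarrow> 'b::comm_ring_1"
  assumes "finite A" "a \<in> A" "\<And>x. x \<in> A - {a} \<Longrightarrow> f x = c"
  shows "sum f A = f a + (of_nat (card A) - 1) * c"
proof -
  have "sum f A = f a + sum f (A - {a})" using assms(1,2) by (rule sum.remove)
  also have "sum f (A - {a}) = of_nat (card A - 1) * c" using assms by simp
  moreover have "card A > 0" using assms(1,2) card_gt_0_iff by blast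
  ultimately show ?thesis by (simp add: Suc_le_eq)
qed

lemma char_sum_one_char_group:
  "D \<subseteq> carrier G \<Longrightarrow> char_sum \<one>\<^bsub>char_group G\<^esub> D = of_nat (card D)"
  by (simp add: one_char_group char_sum_def subset_iff)

lemma char_sum_cong_card_if_subgroup_prime_power:
  assumes G: "group G" and D: "D \<subseteq> carrier G" "finite D" and p: "Factorial_Ring.prime p"
    and P: "subgroup P (char_group G)" "card P = p ^ e"
    and \<xi>: "\<xi> \<in> P" "char_sum \<xi> D = of_int c"
  shows "[c = int (card D)] (mod int p)"
proof (rule sum_roots_of_unity_cong_card[OF p D(2)])
  have lin: "\<xi> \<in> linear_chars G" using subgroup.subset[OF P(1)] \<xi>(1) by auto
  fix d assume "d \<in> D"
  then have "d \<in> carrier G" using D(1) by blast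
  have "(\<xi> [^]\<^bsub>char_group G\<^esub> card P) d = 1"
    using subgroup_nat_pow_card_eq_one[OF group_char_group[OF G] P(1) \<xi>(1)] \<open>d \<in> carrier G\<close>
    by (simp add: one_char_group)
  then show "\<xi> d ^ (p ^ e) = 1"
    using char_group_nat_pow[OF lin \<open>d \<in> carrier G\<close>] P(2) by simp
qed (use \<xi>(2) in \<open>simp add: char_sum_def\<close>)

lemma regular_pds_char_sums_eq_if_subgroup_prime_power:
  fixes G (structure)
  assumes G: "group G" "finite (carrier G)" and pds: "is_regular_pds G v k lam mu D"
    and s: "s\<^sup>2 = pds_Delta k lam mu" and p: "Factorial_Ring.prime p" "\<not> int p dvd s"
    and P: "subgroup P (char_group G)" "card P = p ^ e"
    and \<xi>: "\<xi>1 \<in> P" "\<xi>2 \<in> P" "\<xi>1 \<noteq> \<one>\<^bsub>char_group G\<^esub>" "\<xi>2 \<noteq> \<one>\<^bsub>char_group G\<^esub>"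
  shows "char_sum \<xi>1 D = char_sum \<xi>2 D"
proof -
  have D: "D \<subseteq> carrier G" "finite D"
    using pds G(2) finite_subset unfolding is_regular_pds_def is_pds_def by auto
  have lin: "\<xi>1 \<in> linear_chars G" "\<xi>2 \<in> linear_chars G" using subgroup.subset[OF P(1)] \<xi> by auto
  obtain c1 where c1: "char_sum \<xi>1 D = of_int c1"
    and "2 * c1 = int lam - int mu + s \<or> 2 * c1 = int lam - int mu - s"
    by (rule regular_pds_char_sum_eq_of_int[OF G pds s lin(1) \<xi>(3)])
  moreover obtain c2 where c2: "char_sum \<xi>2 D = of_int c2"
    and "2 * c2 = int lam - int mu + s \<or> 2 * c2 = int lam - int mu - s"
    by (rule regular_pds_char_sum_eq_of_int[OF G pds s lin(2) \<xi>(4)])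
  ultimately have "c1 - c2 \<in> {0, s, - s}" by auto
  moreover have "[c1 = int (card D)] (mod int p)" "[c2 = int (card D)] (mod int p)"
    using char_sum_cong_card_if_subgroup_prime_power[OF G(1) D p(1) P] \<xi>(1,2) c1 c2 by auto
  then have "int p dvd c1 - c2" by (metis cong_iff_dvd_diff cong_sym cong_trans)
  ultimately have "c1 = c2" using p(2) by auto
  then show ?thesis using c1 c2 by simp
qed

theorem mainTheorem5:
  fixes G :: "('a, 'b) monoid_scheme" and D :: "'a set"
    and v k lam mu p :: nat and s :: int and P :: "('a \<Rightarrow> complex) set"
  assumes "group G" and "finite (carrier G)"
    and "is_regular_pds G v k lam mu D"
    and "0 < mu" and "mu < k"
    and "s \<ge> 0" and "s ^ 2 = pds_Delta k lam mu"
    and "Factorial_Ring.prime p" and "\<not> int p dvd s"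
    and "is_sylow (char_group G) p P" and "card P > 1"
  shows "(\<forall>\<xi>' \<in> P. \<xi>' \<noteq> \<one>\<^bsub>char_group G\<^esub> \<longrightarrow>
           (\<Sum>\<xi>\<in>P. char_sum \<xi> D) = of_nat k + (of_nat (card P) - 1) * char_sum \<xi>' D)
       \<and> (\<forall>\<xi>1 \<in> P. \<forall>\<xi>2 \<in> P. \<xi>1 \<noteq> \<one>\<^bsub>char_group G\<^esub> \<longrightarrow> \<xi>2 \<noteq> \<one>\<^bsub>char_group G\<^esub> \<longrightarrow>
           char_sum \<xi>1 D = char_sum \<xi>2 D)"
proof -
  obtain e where P: "subgroup P (char_group G)" "card P = p ^ e"
    using assms(10) unfolding is_sylow_def by blast
  note same = regular_pds_char_sums_eq_if_subgroup_prime_power[OF assms(1-3,7-9) P]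
  have D: "D \<subseteq> carrier G" "card D = k"
    using assms(3) unfolding is_regular_pds_def is_pds_def by auto
  have "finite P" using assms(11) card.infinite by force
  show ?thesis
  proof (intro conjI ballI impI)
    fix \<xi>' assume \<xi>': "\<xi>' \<in> P" "\<xi>' \<noteq> \<one>\<^bsub>char_group G\<^esub>"
    have "(\<Sum>\<xi>\<in>P. char_sum \<xi> D) =
        char_sum \<one>\<^bsub>char_group G\<^esub> D + (of_nat (card P) - 1) * char_sum \<xi>' D"
      by (rule sum_point_plus_const[OF \<open>finite P\<close> subgroup.one_closed[OF P(1)]])
         (use same[OF _ \<xi>'(1) _ \<xi>'(2)] in blast)
    then show "(\<Sum>\<xi>\<in>P. char_sum \<xi> D) = of_nat k + (of_nat (card P) - 1) * char_sum \<xi>' D"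
      using char_sum_one_char_group[OF D(1)] D(2) by simp
  qed (rule same)
qed

end
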